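(* Let $s\ge 1$ be real, let $Y\subseteq V$ be nonempty and let $X\subseteq Y$. Then $X$ is $s$-sparse in $Y$ if and only if $|Y_k\cap X|<k/s$ for every integer $k=1,2,\dots,|Y|$. In particular, if $X$ is $s$-sparse in $Y$, then $|X|<|Y|/s$.
   Context: Let $G$ be a finite graph with vertex set $V$, $|V|=n$, and $t=\chi_f(G)$. Fix a weight function $w:V\to\mathbb{R}_{\ge0}$ with $w(V)=t$ and $w(I)\le 1$ for every independent set $I$ of $G$, where $w(A)=\sum_{v\in A}w(v)$. List the vertices as $v_1,\dots,v_n$ so that $w(v_{i+1})\le w(v_i)$ for all $i$. Every subset $X\subseteq V$ is ordered according to this ordering of $V$, and $X_k$ denotes the set of the first $k$ elements of $X$; for real $s\ge1$, $X_s:=X_{\lfloor s\rfloor}$. For real $s\ge1$ and $Y\subseteq V$, a nonempty subset $X\subseteq Y$ is called $s$-principal in $Y$ if $X\subseteq Y_{s|X|}$ (i.e., all elements of $X$ are among the first $\lfloor s|X|\rfloor$ elements of $Y$). A subset $X\subseteq Y$ is called $s$-sparse in $Y$ if $X$ contains no subset that is $s$-principal in $Y$. *)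

theory Defs
  imports Complex_Main
begin

definition indep_set :: "'a set \<Rightarrow> ('a \<Rightarrow> 'a \<Rightarrow> bool) \<Rightarrow> 'a set \<Rightarrow> bool" where
  "indep_set V E I \<longleftrightarrow> I \<subseteq> V \<and> (\<forall>u\<in>I. \<forall>v\<in>I. \<not> E u v)"

definition frac_colouring :: "'a set \<Rightarrow> ('a \<Rightarrow> 'a \<Rightarrow> bool) \<Rightarrow> ('a set \<Rightarrow> real) \<Rightarrow> bool" where
  "frac_colouring V E y \<longleftrightarrow>
     (\<forall>I. y I \<ge> 0) \<and> (\<forall>I. \<not> indep_set V E I \<longrightarrow> y I = 0) \<and>
     (\<forall>v\<in>V. (\<Sum>I\<in>{I. indep_set V E I \<and> v \<in> I}. y I) \<ge> 1)"

definition frac_chromatic :: "'a set \<Rightarrow> ('a \<Rightarrow> 'a \<Rightarrow> bool) \<Rightarrow> real" where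
  "frac_chromatic V E =
     Inf {(\<Sum>I\<in>{I. indep_set V E I}. y I) | y. frac_colouring V E y}"

text \<open>Subsets are ordered according to the fixed listing vs of V;
  first k elements of X.\<close>
definition prefix_set :: "'a list \<Rightarrow> 'a set \<Rightarrow> nat \<Rightarrow> 'a set" where
  "prefix_set vs X k = set (take k (filter (\<lambda>v. v \<in> X) vs))"

definition prefix_set_real :: "'a list \<Rightarrow> 'a set \<Rightarrow> real \<Rightarrow> 'a set" where
  "prefix_set_real vs X s = prefix_set vs X (nat \<lfloor>s\<rfloor>)"

definition principal :: "'a list \<Rightarrow> real \<Rightarrow> 'a set \<Rightarrow> 'a set \<Rightarrow> bool" where
  "principal vs s Y X \<longleftrightarrow> X \<noteq> {} \<and> X \<subseteq> Y \<and> X \<subseteq> prefix_set_real vs Y (s * real (card X))"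

definition sparse :: "'a list \<Rightarrow> real \<Rightarrow> 'a set \<Rightarrow> 'a set \<Rightarrow> bool" where
  "sparse vs s Y X \<longleftrightarrow> X \<subseteq> Y \<and> \<not> (\<exists>Z\<subseteq>X. principal vs s Y Z)"

end

theory Submission
  imports Defs
begin

text \<open>A principal set Z \<subseteq> X lies in Y_m with m = \<lfloor>s |Z|\<rfloor>, so the slice Y_m \<inter> X has at
  least m/s elements; conversely, a slice Y_k \<inter> X with at least k/s elements is itself principal.
  Hence X is sparse exactly when every slice Y_k \<inter> X has fewer than k/s elements, and k = |Y|
  gives the bound on |X|.\<close>

lemma prefix_set_subset: "prefix_set vs Y k \<subseteq> Y"
  unfolding prefix_set_def by (auto dest: in_set_takeD)

lemma prefix_set_mono: "k \<le> m \<Longrightarrow> prefix_set vs Y k \<subseteq> prefix_set vs Y m"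
  unfolding prefix_set_def by (rule set_take_subset_set_take)

lemma prefix_set_eq_self:
  assumes "distinct vs" "Y \<subseteq> set vs" "card Y \<le> m"
  shows "prefix_set vs Y m = Y"
proof -
  have "set (filter (\<lambda>v. v \<in> Y) vs) = Y" using assms(2) by auto
  moreover have "length (filter (\<lambda>v. v \<in> Y) vs) = card Y"
    using assms(1) calculation by (metis distinct_card distinct_filter)
  ultimately show ?thesis using assms(3) unfolding prefix_set_def by simp
qed

lemma prefix_set_min_card:
  assumes "distinct vs" "Y \<subseteq> set vs"
  shows "prefix_set vs Y (min m (card Y)) = prefix_set vs Y m"
  using prefix_set_eq_self[OF assms] by (cases "m \<le> card Y") (auto simp: min_def)

lemma principal_prefix_slice:
  assumes "s > 0" "k \<ge> 1" "real k \<le> s * real (card (prefix_set vs Y k \<inter> X))"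
  shows "principal vs s Y (prefix_set vs Y k \<inter> X)"
proof -
  let ?Z = "prefix_set vs Y k \<inter> X"
  have "card ?Z \<noteq> 0" using assms(2,3) by (intro notI) simp
  then have "?Z \<noteq> {}" by auto
  moreover have "k \<le> nat \<lfloor>s * real (card ?Z)\<rfloor>" using assms(3) by linarith
  then have "?Z \<subseteq> prefix_set_real vs Y (s * real (card ?Z))"
    unfolding prefix_set_real_def by (meson inf.coboundedI1 prefix_set_mono)
  ultimately show ?thesis unfolding principal_def using prefix_set_subset[of vs Y k] by blast
qed

lemma large_prefix_slice_of_principal:
  assumes "distinct vs" "Y \<subseteq> set vs" "s > 0" "finite X" "Z \<subseteq> X" "principal vs s Y Z"
  obtains k where "k \<in> {1..card Y}" "real k \<le> s * real (card (prefix_set vs Y k \<inter> X))"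
proof
  define m where "m = nat \<lfloor>s * real (card Z)\<rfloor>"
  define k where "k = min m (card Y)"
  have Z_prefix: "Z \<subseteq> prefix_set vs Y k"
    using assms(6) prefix_set_min_card[OF assms(1,2)]
    unfolding principal_def prefix_set_real_def k_def m_def by simp
  have "Z \<noteq> {}" using assms(6) unfolding principal_def by blast
  then have "k \<noteq> 0" using Z_prefix unfolding prefix_set_def by auto
  moreover have "card Y \<ge> k" unfolding k_def by simp
  ultimately show "k \<in> {1..card Y}" by simp
  have "Z \<subseteq> prefix_set vs Y k \<inter> X" using Z_prefix assms(5) by blast
  then have card_le: "card Z \<le> card (prefix_set vs Y k \<inter> X)"
    using assms(4) by (intro card_mono) auto
  have "0 \<le> s * real (card Z)" using assms(3) by simp
  have "real k \<le> real m" unfolding k_def by simp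
  also have "\<dots> \<le> s * real (card Z)" unfolding m_def using \<open>0 \<le> s * real (card Z)\<close> by linarith
  also have "\<dots> \<le> s * real (card (prefix_set vs Y k \<inter> X))" using card_le assms(3) by simp
  finally show "real k \<le> s * real (card (prefix_set vs Y k \<inter> X))" .
qed

lemma sparse_iff_prefix_slices_small:
  assumes "distinct vs" "Y \<subseteq> set vs" "X \<subseteq> Y" "s > 0"
  shows "sparse vs s Y X \<longleftrightarrow>
           (\<forall>k\<in>{1..card Y}. real (card (prefix_set vs Y k \<inter> X)) < real k / s)"
    (is "_ \<longleftrightarrow> (\<forall>k\<in>_. ?small k)")
proof -
  have small_iff: "?small k \<longleftrightarrow> \<not> real k \<le> s * real (card (prefix_set vs Y k \<inter> X))" for k
    using assms(4) by (simp add: pos_less_divide_eq mult.commute not_le)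
  have "finite X" using assms(2,3) by (meson finite_set finite_subset order.trans)
  show ?thesis
  proof
    assume sparse: "sparse vs s Y X"
    show "\<forall>k\<in>{1..card Y}. ?small k"
    proof
      fix k assume k: "k \<in> {1..card Y}"
      show "?small k"
      proof (rule ccontr)
        assume "\<not> ?small k"
        then have "principal vs s Y (prefix_set vs Y k \<inter> X)"
          using k small_iff by (intro principal_prefix_slice[OF assms(4)]) auto
        with sparse show False unfolding sparse_def by blast
      qed
    qed
  next
    assume small: "\<forall>k\<in>{1..card Y}. ?small k"
    have "\<not> principal vs s Y Z" if Z_sub: "Z \<subseteq> X" for Z
    proof
      assume "principal vs s Y Z"
      then obtain k where "k \<in> {1..card Y}"
        and "real k \<le> s * real (card (prefix_set vs Y k \<inter> X))"
        using large_prefix_slice_of_principal[OF assms(1,2,4) \<open>finite X\<close> Z_sub] by blast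
      with small small_iff show False by blast
    qed
    then show "sparse vs s Y X" unfolding sparse_def using assms(3) by blast
  qed
qed

lemma card_less_of_sparse:
  assumes "distinct vs" "Y \<subseteq> set vs" "X \<subseteq> Y" "s > 0" "Y \<noteq> {}" "sparse vs s Y X"
  shows "real (card X) < real (card Y) / s"
proof -
  have "card Y \<ge> 1" using assms(2,5) by (simp add: Suc_leI card_gt_0_iff finite_subset)
  then have "real (card (prefix_set vs Y (card Y) \<inter> X)) < real (card Y) / s"
    using assms(6) sparse_iff_prefix_slices_small[OF assms(1-4)] by simp
  moreover have "prefix_set vs Y (card Y) \<inter> X = X"
    using prefix_set_eq_self[OF assms(1,2)] assms(3) by auto
  ultimately show ?thesis by simp
qed

theorem lemma3:
  fixes V :: "'a set" and E :: "'a \<Rightarrow> 'a \<Rightarrow> bool" and w :: "'a \<Rightarrow> real"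
    and vs :: "'a list" and s :: real and X Y :: "'a set"
  assumes finV: "finite V"
    and E_sym: "\<forall>u v. E u v \<longrightarrow> E v u"
    and E_irrefl: "\<forall>v. \<not> E v v"
    and E_in: "\<forall>u v. E u v \<longrightarrow> u \<in> V \<and> v \<in> V"
    and w_nonneg: "\<forall>v\<in>V. w v \<ge> 0"
    and w_total: "(\<Sum>v\<in>V. w v) = frac_chromatic V E"
    and w_indep: "\<forall>I. indep_set V E I \<longrightarrow> (\<Sum>v\<in>I. w v) \<le> 1"
    and vs_distinct: "distinct vs"
    and vs_set: "set vs = V"
    and vs_sorted: "\<forall>i. Suc i < length vs \<longrightarrow> w (vs ! Suc i) \<le> w (vs ! i)"
    and s_ge: "s \<ge> 1"
    and Y_sub: "Y \<subseteq> V" and Y_ne: "Y \<noteq> {}"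
    and X_sub: "X \<subseteq> Y"
  shows "(sparse vs s Y X \<longleftrightarrow>
            (\<forall>k\<in>{1..card Y}. real (card (prefix_set vs Y k \<inter> X)) < real k / s))
         \<and> (sparse vs s Y X \<longrightarrow> real (card X) < real (card Y) / s)"
proof -
  have Y_vs: "Y \<subseteq> set vs" using Y_sub vs_set by simp
  have s_pos: "s > 0" using s_ge by simp
  show ?thesis
    using sparse_iff_prefix_slices_small[OF vs_distinct Y_vs X_sub s_pos]
      card_less_of_sparse[OF vs_distinct Y_vs X_sub s_pos Y_ne] by blast
qed

end
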